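(* Let $G_1,G_2$ be finite simple graphs with the same number of vertices. Then $\dim_{\mathbb{C}} Z(A_{G_1})=\dim_{\mathbb{C}} Z(A_{G_2})$ (i.e. they belong to the same Clifford class) if and only if their adjacency matrices, regarded as matrices over the field $\mathbb{F}_2$, have the same rank.
   Context: All graphs are finite, with no loops and no multiple edges. For a graph $G$ with vertices numbered $1,\dots,n$, the Clifford graph algebra $A_G$ is the unital associative $\mathbb{C}$-algebra generated by $e_1,\dots,e_n$ subject to the relations $e_i^2=-1$ for all $i$; $e_ie_j=-e_je_i$ if $i\neq j$ and vertices $i,j$ are adjacent; and $e_ie_j=e_je_i$ if $i\ne j$ and vertices $i,j$ are not adjacent. $Z(A)$ denotes the center. The adjacency matrix of $G$ is the $n\times n$ matrix $(a_{ij})$ with $a_{ij}=1$ if vertices $i,j$ are adjacent and $a_{ij}=0$ otherwise (so $a_{ii}=0$). *)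

theory Defs
  imports Main "HOL-Library.Function_Algebras" "HOL-Library.Z2" "Jordan_Normal_Form.DL_Rank"
begin

definition simple_graph :: "nat \<Rightarrow> (nat \<Rightarrow> nat \<Rightarrow> bool) \<Rightarrow> bool" where
  "simple_graph n E \<longleftrightarrow> (\<forall>i j. E i j \<longrightarrow> i < n \<and> j < n \<and> i \<noteq> j \<and> E j i)"

text \<open>Free associative unital C-algebra on letters: finitely supported functions
  from words (lists of letters) to complex numbers, with concatenation product.\<close>
definition fa_scale :: "complex \<Rightarrow> (nat list \<Rightarrow> complex) \<Rightarrow> (nat list \<Rightarrow> complex)" where
  "fa_scale c p = (\<lambda>w. c * p w)"

definition fa_mult :: "(nat list \<Rightarrow> complex) \<Rightarrow> (nat list \<Rightarrow> complex) \<Rightarrow> (nat list \<Rightarrow> complex)" where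
  "fa_mult p q = (\<lambda>w. \<Sum>k\<le>length w. p (take k w) * q (drop k w))"

definition fa_one :: "nat list \<Rightarrow> complex" where
  "fa_one = (\<lambda>w. if w = [] then 1 else 0)"

definition fa_gen :: "nat \<Rightarrow> nat list \<Rightarrow> complex" where
  "fa_gen i = (\<lambda>w. if w = [i] then 1 else 0)"

definition free_alg :: "nat \<Rightarrow> (nat list \<Rightarrow> complex) set" where
  "free_alg n = {p. finite {w. p w \<noteq> 0} \<and> (\<forall>w. p w \<noteq> 0 \<longrightarrow> set w \<subseteq> {..<n})}"

text \<open>Defining relations of the Clifford graph algebra A_G (as elements that must vanish).\<close>
definition cga_rels :: "nat \<Rightarrow> (nat \<Rightarrow> nat \<Rightarrow> bool) \<Rightarrow> (nat list \<Rightarrow> complex) set" where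
  "cga_rels n E =
     {fa_mult (fa_gen i) (fa_gen i) + fa_one | i. i < n}
   \<union> {fa_mult (fa_gen i) (fa_gen j) + fa_mult (fa_gen j) (fa_gen i) | i j. i < n \<and> j < n \<and> i \<noteq> j \<and> E i j}
   \<union> {fa_mult (fa_gen i) (fa_gen j) - fa_mult (fa_gen j) (fa_gen i) | i j. i < n \<and> j < n \<and> i \<noteq> j \<and> \<not> E i j}"

definition cga_ideal :: "nat \<Rightarrow> (nat \<Rightarrow> nat \<Rightarrow> bool) \<Rightarrow> (nat list \<Rightarrow> complex) set" where
  "cga_ideal n E = module.span fa_scale
     {fa_mult (fa_mult a r) b | a r b. a \<in> free_alg n \<and> r \<in> cga_rels n E \<and> b \<in> free_alg n}"

text \<open>Preimage in the free algebra of the center Z(A_G), A_G = free_alg n / cga_ideal n E.\<close>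
definition cga_center_lift :: "nat \<Rightarrow> (nat \<Rightarrow> nat \<Rightarrow> bool) \<Rightarrow> (nat list \<Rightarrow> complex) set" where
  "cga_center_lift n E = {x \<in> free_alg n. \<forall>y \<in> free_alg n. fa_mult x y - fa_mult y x \<in> cga_ideal n E}"

text \<open>Dimension of the quotient space V/W: maximal number of vectors of V linearly
  independent modulo W.\<close>
definition quot_dim :: "(nat list \<Rightarrow> complex) set \<Rightarrow> (nat list \<Rightarrow> complex) set \<Rightarrow> nat" where
  "quot_dim V W = Sup {card B | B. B \<subseteq> V \<and> finite B \<and> \<not> module.dependent fa_scale B
                          \<and> module.span fa_scale B \<inter> W = {0}}"

definition cga_center_dim :: "nat \<Rightarrow> (nat \<Rightarrow> nat \<Rightarrow> bool) \<Rightarrow> nat" where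
  "cga_center_dim n E = quot_dim (cga_center_lift n E) (cga_ideal n E)"

definition adj_mat_F2 :: "nat \<Rightarrow> (nat \<Rightarrow> nat \<Rightarrow> bool) \<Rightarrow> bit mat" where
  "adj_mat_F2 n E = mat n n (\<lambda>(i, j). if E i j then 1 else 0)"

end

theory Submission
  imports Defs
begin

text \<open>
  The Clifford graph algebra A_G is the quotient of the free algebra on the letters
  0, ..., n-1 by the two-sided ideal I generated by its defining relations.  We compute
  the dimension of its centre explicitly, namely dim Z(A_G) = 2^(n - r) where r is the
  rank of the adjacency matrix over F_2; the theorem follows because k \<mapsto> 2^(n-k) is
  injective for k \<le> n.

  Modulo I every word w equals \<plusminus>e_S, where S is the set of letters
  occurring an odd number of times in w and e_S is the increasing word on S; the sign is
  given explicitly by counting inversions.  Conversely the linear functional picking out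
  the signed coefficient of e_S vanishes on I, so the monomials e_S are independent
  modulo I.

  Commuting with a generator e_i multiplies the e_S-coefficient by
  (-1)^(number of neighbours of i in S), so central elements are supported on the sets
  S in which every vertex has an even number of neighbours, and for those S the monomial
  e_S is central.  Hence dim Z(A_G) is the number of such sets.

  These sets correspond to the kernel of the adjacency matrix,
  and over a finite field with q elements a kernel of an n-column matrix of rank r has
  q^(n-r) elements, by counting the fibres of the associated linear map.
\<close>

section \<open>The free algebra\<close>

interpretation fa: vector_space fa_scale
  by unfold_locales (auto simp: fa_scale_def fun_eq_iff algebra_simps)

definition word_elt :: "nat list \<Rightarrow> nat list \<Rightarrow> complex" where
  "word_elt u = (\<lambda>w. if w = u then 1 else 0)"

lemma fa_gen_word_elt: "fa_gen i = word_elt [i]"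
  and fa_one_word_elt: "fa_one = word_elt []"
  by (auto simp: fa_gen_def fa_one_def word_elt_def)

lemma word_elt_inj: "word_elt u = word_elt v \<Longrightarrow> u = v"
  unfolding word_elt_def by (metis zero_neq_one)

lemma word_elt_free_alg: "set u \<subseteq> {..<n} \<Longrightarrow> word_elt u \<in> free_alg n"
  by (auto simp: free_alg_def word_elt_def)

lemma sum_apply: "(sum f A) x = (\<Sum>a\<in>A. f a x)"
  by (induct A rule: infinite_finite_induct) auto

lemma fa_scale_apply [simp]: "fa_scale c p w = c * p w"
  by (simp add: fa_scale_def)

lemma fa_mult_word_elt: "fa_mult (word_elt u) (word_elt v) = word_elt (u @ v)"
proof
  fix w
  have split_iff: "(take k w = u \<and> drop k w = v) \<longleftrightarrow> (w = u @ v \<and> k = length u)"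
    if "k \<le> length w" for k
  proof
    assume h: "take k w = u \<and> drop k w = v"
    have "k = length u" using h that by auto
    moreover have "w = u @ v" using h by (metis append_take_drop_id)
    ultimately show "w = u @ v \<and> k = length u" by simp
  qed simp
  have "fa_mult (word_elt u) (word_elt v) w
      = (\<Sum>k\<le>length w. if k = length u then (if w = u @ v then 1 else 0) else (0::complex))"
    unfolding fa_mult_def word_elt_def
  proof (intro sum.cong refl)
    fix k assume "k \<in> {..length w}"
    then have "(take k w = u \<and> drop k w = v) \<longleftrightarrow> (w = u @ v \<and> k = length u)"
      using split_iff by simp
    then show "(if take k w = u then 1 else 0) * (if drop k w = v then 1 else 0)
        = (if k = length u then (if w = u @ v then 1 else 0) else (0::complex))"
      by (cases "take k w = u"; cases "drop k w = v") auto
  qed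
  also have "\<dots> = word_elt (u @ v) w"
    by (auto simp: word_elt_def)
  finally show "fa_mult (word_elt u) (word_elt v) w = word_elt (u @ v) w" .
qed

lemma fa_mult_add_left: "fa_mult (p + q) r = fa_mult p r + fa_mult q r"
  and fa_mult_add_right: "fa_mult r (p + q) = fa_mult r p + fa_mult r q"
  and fa_mult_diff_left: "fa_mult (p - q) r = fa_mult p r - fa_mult q r"
  and fa_mult_diff_right: "fa_mult r (p - q) = fa_mult r p - fa_mult r q"
  and fa_mult_scale_left: "fa_mult (fa_scale c p) r = fa_scale c (fa_mult p r)"
  and fa_mult_scale_right: "fa_mult r (fa_scale c p) = fa_scale c (fa_mult r p)"
  by (auto simp: fa_mult_def fun_eq_iff sum.distrib sum_subtractf sum_distrib_left algebra_simps)

lemma fa_mult_sum_left: "fa_mult (sum f A) r = (\<Sum>a\<in>A. fa_mult (f a) r)"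
  unfolding fa_mult_def by (rule ext) (simp add: sum_apply sum_distrib_right sum.swap[of _ A])

lemma fa_mult_sum_right: "fa_mult r (sum f A) = (\<Sum>a\<in>A. fa_mult r (f a))"
  unfolding fa_mult_def by (rule ext) (simp add: sum_apply sum_distrib_left sum.swap[of _ A])

definition fa_supp :: "(nat list \<Rightarrow> complex) \<Rightarrow> nat list set" where
  "fa_supp p = {w. p w \<noteq> 0}"

lemma fa_supp_zero [simp]: "fa_supp 0 = {}"
  by (simp add: fa_supp_def)

lemma fa_supp_word_elt [simp]: "fa_supp (word_elt w) = {w}"
  by (auto simp: fa_supp_def word_elt_def)

lemma free_alg_fa_supp: "p \<in> free_alg n \<Longrightarrow> finite (fa_supp p)"
  by (simp add: free_alg_def fa_supp_def)

lemma free_alg_words: "p \<in> free_alg n \<Longrightarrow> w \<in> fa_supp p \<Longrightarrow> set w \<subseteq> {..<n}"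
  by (auto simp: free_alg_def fa_supp_def)

lemma finite_fa_supp_add: "finite (fa_supp p) \<Longrightarrow> finite (fa_supp q) \<Longrightarrow> finite (fa_supp (p + q))"
  and finite_fa_supp_diff: "finite (fa_supp p) \<Longrightarrow> finite (fa_supp q) \<Longrightarrow> finite (fa_supp (p - q))"
  and finite_fa_supp_scale: "finite (fa_supp p) \<Longrightarrow> finite (fa_supp (fa_scale c p))"
  and finite_fa_supp_uminus: "finite (fa_supp p) \<Longrightarrow> finite (fa_supp (- p))"
  by (auto simp: fa_supp_def intro: finite_subset[of _ "fa_supp p \<union> fa_supp q"] finite_subset[of _ "fa_supp p"])

lemma finite_fa_supp_sum:
  "(\<And>a. a \<in> A \<Longrightarrow> finite (fa_supp (f a))) \<Longrightarrow> finite (fa_supp (sum f A))"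
  by (induct A rule: infinite_finite_induct) (auto intro: finite_fa_supp_add)

lemma fa_expansion: "finite (fa_supp p) \<Longrightarrow> p = (\<Sum>w\<in>fa_supp p. fa_scale (p w) (word_elt w))"
proof
  fix x assume fin: "finite (fa_supp p)"
  have "(\<Sum>w\<in>fa_supp p. fa_scale (p w) (word_elt w)) x = (\<Sum>w\<in>fa_supp p. if w = x then p w else 0)"
    unfolding sum_apply by (intro sum.cong) (auto simp: word_elt_def)
  also have "\<dots> = p x" using fin by (auto simp: fa_supp_def)
  finally show "p x = (\<Sum>w\<in>fa_supp p. fa_scale (p w) (word_elt w)) x" by simp
qed

lemma fa_mult_word_right:
  "finite (fa_supp p) \<Longrightarrow> fa_mult p (word_elt v) = (\<Sum>u\<in>fa_supp p. fa_scale (p u) (word_elt (u @ v)))"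
  by (subst fa_expansion) (simp_all add: fa_mult_sum_left fa_mult_scale_left fa_mult_word_elt)

lemma fa_mult_word_left:
  "finite (fa_supp p) \<Longrightarrow> fa_mult (word_elt v) p = (\<Sum>u\<in>fa_supp p. fa_scale (p u) (word_elt (v @ u)))"
  by (subst fa_expansion) (simp_all add: fa_mult_sum_right fa_mult_scale_right fa_mult_word_elt)

lemma finite_fa_supp_mult_word:
  "finite (fa_supp p) \<Longrightarrow> finite (fa_supp (fa_mult p (word_elt v)))"
  "finite (fa_supp p) \<Longrightarrow> finite (fa_supp (fa_mult (word_elt v) p))"
  by (simp_all add: fa_mult_word_right fa_mult_word_left finite_fa_supp_sum finite_fa_supp_scale)

lemma fa_mult3_expansion:
  assumes "finite (fa_supp a)" "finite (fa_supp b)"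
  shows "fa_mult (fa_mult a r) b
       = (\<Sum>u\<in>fa_supp a. \<Sum>v\<in>fa_supp b. fa_scale (a u * b v) (fa_mult (fa_mult (word_elt u) r) (word_elt v)))"
proof -
  have "fa_mult (fa_mult a r) b = fa_mult (fa_mult (\<Sum>u\<in>fa_supp a. fa_scale (a u) (word_elt u)) r)
                                          (\<Sum>v\<in>fa_supp b. fa_scale (b v) (word_elt v))"
    by (intro arg_cong2[where f=fa_mult] fa_expansion assms refl)
  also have "\<dots> = (\<Sum>u\<in>fa_supp a. \<Sum>v\<in>fa_supp b. fa_scale (a u * b v) (fa_mult (fa_mult (word_elt u) r) (word_elt v)))"
    by (simp add: fa_mult_sum_left fa_mult_sum_right fa_mult_scale_left fa_mult_scale_right
        fa.scale_sum_right mult.commute) (rule sum.swap)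
  finally show ?thesis .
qed

section \<open>Signs of words\<close>

text \<open>The letters occurring an odd number of times: a word reduces modulo the relations to
  the increasing word on this set.\<close>
definition odd_letters :: "nat list \<Rightarrow> nat set" where
  "odd_letters w = {a. odd (count_list w a)}"

text \<open>An occurrence of a before b costs a sign in the reduction if a and b are adjacent
  vertices out of order (an anticommuting swap) or equal letters (a square e_a^2 = -1).\<close>
definition sign_pair :: "(nat \<Rightarrow> nat \<Rightarrow> bool) \<Rightarrow> nat \<Rightarrow> nat \<Rightarrow> bool" where
  "sign_pair E a b \<longleftrightarrow> (b < a \<and> E a b) \<or> a = b"

fun inversions :: "(nat \<Rightarrow> nat \<Rightarrow> bool) \<Rightarrow> nat list \<Rightarrow> nat" where
  "inversions E [] = 0"
| "inversions E (a # w) = length (filter (sign_pair E a) w) + inversions E w"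

definition cross_inversions :: "(nat \<Rightarrow> nat \<Rightarrow> bool) \<Rightarrow> nat list \<Rightarrow> nat list \<Rightarrow> nat" where
  "cross_inversions E u v = (\<Sum>a\<leftarrow>u. length (filter (sign_pair E a) v))"

text \<open>The sign with which a word equals its normal form.\<close>
definition word_sign :: "(nat \<Rightarrow> nat \<Rightarrow> bool) \<Rightarrow> nat list \<Rightarrow> complex" where
  "word_sign E w = (-1) ^ inversions E w"

definition sym_irrefl :: "(nat \<Rightarrow> nat \<Rightarrow> bool) \<Rightarrow> bool" where
  "sym_irrefl E \<longleftrightarrow> (\<forall>a b. E a b \<longrightarrow> E b a) \<and> (\<forall>a. \<not> E a a)"

lemma simple_graph_sym_irrefl: "simple_graph n E \<Longrightarrow> sym_irrefl E"
  unfolding simple_graph_def sym_irrefl_def by blast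

lemma inversions_append:
  "inversions E (u @ v) = inversions E u + inversions E v + cross_inversions E u v"
  by (induct u) (auto simp: cross_inversions_def)

lemma cross_inversions_append_right:
  "cross_inversions E u (x @ y) = cross_inversions E u x + cross_inversions E u y"
  unfolding cross_inversions_def by (induct u) auto

lemma cross_inversions_single_right:
  "cross_inversions E u [b] = length (filter (\<lambda>a. sign_pair E a b) u)"
  unfolding cross_inversions_def by (induct u) auto

lemma odd_letters_append: "odd_letters (u @ v) = (odd_letters u - odd_letters v) \<union> (odd_letters v - odd_letters u)"
  by (auto simp: odd_letters_def)

lemma odd_letters_Nil [simp]: "odd_letters [] = {}"
  by (simp add: odd_letters_def)

lemma odd_letters_Cons: "odd_letters (a # w) = (if a \<in> odd_letters w then odd_letters w - {a} else insert a (odd_letters w))"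
  by (auto simp: odd_letters_def)

lemma odd_letters_subset: "odd_letters w \<subseteq> set w"
proof
  fix a assume "a \<in> odd_letters w"
  then have "count_list w a \<noteq> 0" unfolding odd_letters_def by (metis even_zero mem_Collect_eq)
  then show "a \<in> set w" using count_list_0_iff by metis
qed

lemma finite_odd_letters: "finite (odd_letters w)"
  using odd_letters_subset finite_subset by blast

lemma odd_letters_distinct: "distinct xs \<Longrightarrow> odd_letters xs = set xs"
  by (induct xs) (auto simp: odd_letters_Cons)

lemma odd_letters_square: "odd_letters (u @ [i, i] @ v) = odd_letters (u @ v)"
  and odd_letters_swap: "odd_letters (u @ [i, j] @ v) = odd_letters (u @ [j, i] @ v)"
  by (auto simp: odd_letters_def)

lemma word_sign_square: "word_sign E (u @ [i, i] @ v) = - word_sign E (u @ v)"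
proof -
  have "cross_inversions E u ([i, i] @ v) = 2 * cross_inversions E u [i] + cross_inversions E u v"
    using cross_inversions_append_right[of E u "[i]" "[i] @ v"]
      cross_inversions_append_right[of E u "[i]" v] by simp
  then have "inversions E (u @ [i, i] @ v)
      = inversions E (u @ v) + 1 + 2 * (length (filter (sign_pair E i) v) + cross_inversions E u [i])"
    unfolding inversions_append by (simp add: sign_pair_def cross_inversions_def)
  then show ?thesis by (simp add: word_sign_def power_add)
qed

lemma word_sign_swap:
  assumes "sym_irrefl E" "i \<noteq> j"
  shows "word_sign E (u @ [i, j] @ v) = (if E i j then -1 else 1) * word_sign E (u @ [j, i] @ v)"
proof -
  have "cross_inversions E u ([i, j] @ v) = cross_inversions E u ([j, i] @ v)"
    by (simp add: cross_inversions_append_right[of E u "[_]" "_ # v", simplified]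
        cross_inversions_append_right[of E u "[_]" v, simplified])
  moreover have "cross_inversions E [i, j] v = cross_inversions E [j, i] v"
    by (simp add: cross_inversions_def)
  ultimately have count: "inversions E (u @ [i, j] @ v) + (if sign_pair E j i then 1 else 0)
                        = inversions E (u @ [j, i] @ v) + (if sign_pair E i j then 1 else 0)"
    unfolding inversions_append by simp
  have sym: "E i j \<longleftrightarrow> E j i" using assms(1) unfolding sym_irrefl_def by blast
  then consider "E i j" "j < i" | "E i j" "i < j" | "\<not> E i j" "\<not> E j i"
    using assms(2) by (meson linorder_neqE_nat)
  then show ?thesis
  proof cases
    case 1
    then have "inversions E (u @ [i, j] @ v) = Suc (inversions E (u @ [j, i] @ v))"
      using count sym by (auto simp: sign_pair_def)
    then show ?thesis using 1 by (simp add: word_sign_def)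
  next
    case 2
    then have "inversions E (u @ [j, i] @ v) = Suc (inversions E (u @ [i, j] @ v))"
      using count sym by (auto simp: sign_pair_def)
    then show ?thesis using 2 by (simp add: word_sign_def)
  next
    case 3
    then have "inversions E (u @ [i, j] @ v) = inversions E (u @ [j, i] @ v)"
      using count assms(2) by (auto simp: sign_pair_def)
    then show ?thesis using 3 by (simp add: word_sign_def)
  qed
qed

lemma inversions_sorted: "sorted_wrt (<) xs \<Longrightarrow> inversions E xs = 0"
proof (induct xs)
  case (Cons a xs)
  have "filter (sign_pair E a) xs = []"
    using Cons(2) by (auto simp: filter_empty_conv sign_pair_def)
  then show ?case using Cons by simp
qed simp

text \<open>The coefficient of the normal monomial e_S in the normal form of p: the signed sum of
  the coefficients of all words reducing to \<plusminus>e_S.  It vanishes on the ideal, which makes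
  the monomials e_S independent modulo the ideal.\<close>
definition nf_coeff :: "(nat \<Rightarrow> nat \<Rightarrow> bool) \<Rightarrow> nat set \<Rightarrow> (nat list \<Rightarrow> complex) \<Rightarrow> complex" where
  "nf_coeff E S p = (\<Sum>w\<in>fa_supp p. if odd_letters w = S then p w * word_sign E w else 0)"

lemma nf_coeff_superset:
  assumes "finite A" "fa_supp p \<subseteq> A"
  shows "nf_coeff E S p = (\<Sum>w\<in>A. if odd_letters w = S then p w * word_sign E w else 0)"
  unfolding nf_coeff_def using assms by (intro sum.mono_neutral_left) (auto simp: fa_supp_def)

lemma nf_coeff_word_elt: "nf_coeff E S (word_elt w) = (if odd_letters w = S then word_sign E w else 0)"
  by (simp add: nf_coeff_def) (simp add: word_elt_def)

lemma nf_coeff_zero [simp]: "nf_coeff E S 0 = 0"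
  by (simp add: nf_coeff_def)

lemma nf_coeff_add:
  assumes "finite (fa_supp p)" "finite (fa_supp q)"
  shows "nf_coeff E S (p + q) = nf_coeff E S p + nf_coeff E S q"
proof -
  let ?A = "fa_supp p \<union> fa_supp q"
  have "fa_supp (p + q) \<subseteq> ?A" by (auto simp: fa_supp_def)
  then show ?thesis
    using assms by (simp add: nf_coeff_superset[of ?A] sum.distrib[symmetric] distrib_right if_distrib
        cong: if_cong)
qed

lemma nf_coeff_scale:
  assumes "finite (fa_supp p)"
  shows "nf_coeff E S (fa_scale c p) = c * nf_coeff E S p"
proof -
  have "fa_supp (fa_scale c p) \<subseteq> fa_supp p" by (auto simp: fa_supp_def)
  then show ?thesis
    using assms by (simp add: nf_coeff_superset[of "fa_supp p"] sum_distrib_left if_distrib mult.assoc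
        cong: if_cong)
qed

lemma nf_coeff_diff:
  assumes "finite (fa_supp p)" "finite (fa_supp q)"
  shows "nf_coeff E S (p - q) = nf_coeff E S p - nf_coeff E S q"
proof -
  have "fa_scale (-1) q = - q" by (auto simp: fun_eq_iff)
  then have "nf_coeff E S (- q) = - nf_coeff E S q"
    using nf_coeff_scale[OF assms(2), of E S "-1"] by simp
  then show ?thesis
    using nf_coeff_add[OF assms(1) finite_fa_supp_uminus[OF assms(2)]] by simp
qed

lemma nf_coeff_sum:
  "(\<And>a. a \<in> A \<Longrightarrow> finite (fa_supp (f a))) \<Longrightarrow> nf_coeff E S (sum f A) = (\<Sum>a\<in>A. nf_coeff E S (f a))"
  by (induct A rule: infinite_finite_induct) (simp_all add: nf_coeff_add finite_fa_supp_sum)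

lemma ideal_add: "x \<in> cga_ideal n E \<Longrightarrow> y \<in> cga_ideal n E \<Longrightarrow> x + y \<in> cga_ideal n E"
  and ideal_diff: "x \<in> cga_ideal n E \<Longrightarrow> y \<in> cga_ideal n E \<Longrightarrow> x - y \<in> cga_ideal n E"
  and ideal_scale: "x \<in> cga_ideal n E \<Longrightarrow> fa_scale c x \<in> cga_ideal n E"
  and ideal_zero: "0 \<in> cga_ideal n E"
  unfolding cga_ideal_def by (simp_all add: fa.span_add fa.span_diff fa.span_scale fa.span_zero)

lemma ideal_sum: "(\<And>a. a \<in> A \<Longrightarrow> f a \<in> cga_ideal n E) \<Longrightarrow> sum f A \<in> cga_ideal n E"
  unfolding cga_ideal_def by (rule fa.span_sum)

lemma ideal_generator:
  assumes "a \<in> free_alg n" "b \<in> free_alg n" "r \<in> cga_rels n E"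
  shows "fa_mult (fa_mult a r) b \<in> cga_ideal n E"
  unfolding cga_ideal_def using assms by (intro fa.span_base) blast

lemma cga_rels_cases:
  assumes "r \<in> cga_rels n E"
  obtains (square) i where "i < n" "r = word_elt [i, i] + word_elt []"
  | (adjacent) i j where "i < n" "j < n" "i \<noteq> j" "E i j" "r = word_elt [i, j] + word_elt [j, i]"
  | (nonadjacent) i j where "i < n" "j < n" "i \<noteq> j" "\<not> E i j" "r = word_elt [i, j] - word_elt [j, i]"
  using assms unfolding cga_rels_def by (auto simp: fa_gen_word_elt fa_one_word_elt fa_mult_word_elt)

text \<open>The normal-form coefficients annihilate every product u r v of words with a relation,
  because the two words of r have the same odd letters and opposite signed contributions.\<close>
lemma nf_coeff_relation_word:
  assumes "sym_irrefl E" "r \<in> cga_rels n E"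
  shows "nf_coeff E S (fa_mult (fa_mult (word_elt u) r) (word_elt v)) = 0"
  using assms(2)
proof (cases rule: cga_rels_cases)
  case (square i)
  then have "fa_mult (fa_mult (word_elt u) r) (word_elt v) = word_elt (u @ [i, i] @ v) + word_elt (u @ v)"
    by (simp add: fa_mult_add_left fa_mult_add_right fa_mult_word_elt)
  then show ?thesis
    using odd_letters_square[of u i v] word_sign_square[of E u i v]
    by (simp add: nf_coeff_add nf_coeff_word_elt)
next
  case (adjacent i j)
  then have "fa_mult (fa_mult (word_elt u) r) (word_elt v) = word_elt (u @ [i, j] @ v) + word_elt (u @ [j, i] @ v)"
    by (simp add: fa_mult_add_left fa_mult_add_right fa_mult_word_elt)
  moreover have "word_sign E (u @ [i, j] @ v) = - word_sign E (u @ [j, i] @ v)"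
    using word_sign_swap[OF assms(1), of i j u v] adjacent by simp
  ultimately show ?thesis
    using odd_letters_swap[of u i j v] by (simp add: nf_coeff_add nf_coeff_word_elt)
next
  case (nonadjacent i j)
  then have "fa_mult (fa_mult (word_elt u) r) (word_elt v) = word_elt (u @ [i, j] @ v) - word_elt (u @ [j, i] @ v)"
    by (simp add: fa_mult_diff_left fa_mult_diff_right fa_mult_word_elt)
  moreover have "word_sign E (u @ [i, j] @ v) = word_sign E (u @ [j, i] @ v)"
    using word_sign_swap[OF assms(1), of i j u v] nonadjacent by simp
  ultimately show ?thesis
    using odd_letters_swap[of u i j v] by (simp add: nf_coeff_diff nf_coeff_word_elt)
qed

lemma finite_fa_supp_relation: "r \<in> cga_rels n E \<Longrightarrow> finite (fa_supp r)"
  by (erule cga_rels_cases) (auto intro!: finite_fa_supp_add finite_fa_supp_diff)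

lemma nf_coeff_ideal:
  assumes "sym_irrefl E" "x \<in> cga_ideal n E"
  shows "finite (fa_supp x) \<and> nf_coeff E S x = 0"
  using assms(2) unfolding cga_ideal_def
proof (induct rule: fa.span_induct_alt)
  case (step c g y)
  then obtain a r b where g: "g = fa_mult (fa_mult a r) b" "a \<in> free_alg n" "r \<in> cga_rels n E" "b \<in> free_alg n"
    by blast
  have fin: "finite (fa_supp a)" "finite (fa_supp b)" "finite (fa_supp r)"
    using g free_alg_fa_supp finite_fa_supp_relation by blast+
  have fin_words: "finite (fa_supp (fa_mult (fa_mult (word_elt u) r) (word_elt v)))" for u v
    using fin(3) by (intro finite_fa_supp_mult_word) (simp add: finite_fa_supp_mult_word)
  have "finite (fa_supp g) \<and> nf_coeff E S g = 0"
    unfolding g(1) fa_mult3_expansion[OF fin(1,2)]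
    using fin_words nf_coeff_relation_word[OF assms(1) g(3)]
    by (simp add: nf_coeff_sum finite_fa_supp_sum finite_fa_supp_scale nf_coeff_scale)
  moreover have "finite (fa_supp (fa_scale c g))"
    using calculation by (simp add: finite_fa_supp_scale)
  ultimately show "finite (fa_supp (fa_scale c g + y)) \<and> nf_coeff E S (fa_scale c g + y) = 0"
    using step(2) nf_coeff_add[of "fa_scale c g" y E S] nf_coeff_scale[of g E S c]
    by (simp add: finite_fa_supp_add)
qed (simp add: fa_supp_def nf_coeff_def)


section \<open>Reduction of words to normal form\<close>

abbreviation sorted_word :: "nat set \<Rightarrow> nat list" where
  "sorted_word \<equiv> sorted_list_of_set"

lemma sorted_word_set: "sorted_wrt (<) xs \<Longrightarrow> sorted_word (set xs) = xs"
  by (simp add: sorted_list_of_set_sort_remdups strict_sorted_iff distinct_remdups_id sorted_sort_id)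

lemma odd_letters_sorted_word: "finite A \<Longrightarrow> odd_letters (sorted_word A) = A"
  by (simp add: odd_letters_distinct)

lemma word_sign_sorted_word: "word_sign E (sorted_word A) = 1"
  by (simp add: word_sign_def inversions_sorted strict_sorted_list_of_set)

lemma nf_coeff_sorted_word: "finite S \<Longrightarrow> nf_coeff E T (word_elt (sorted_word S)) = (if S = T then 1 else 0)"
  by (simp add: nf_coeff_word_elt odd_letters_sorted_word word_sign_sorted_word)

definition toggle :: "nat set \<Rightarrow> nat \<Rightarrow> nat set" where
  "toggle S i = (if i \<in> S then S - {i} else insert i S)"

lemma odd_letters_snoc: "odd_letters (w @ [i]) = toggle (odd_letters w) i"
  by (auto simp: odd_letters_def toggle_def)

lemma odd_letters_Cons_toggle: "odd_letters (i # w) = toggle (odd_letters w) i"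
  by (simp add: odd_letters_Cons toggle_def)

lemma toggle_cancel: "toggle A i = toggle B i \<longleftrightarrow> A = B"
  unfolding toggle_def by (auto split: if_splits)

text \<open>Equality up to a scalar factor modulo the ideal; the reduction steps are of this form.\<close>
definition scalar_equiv :: "nat \<Rightarrow> (nat \<Rightarrow> nat \<Rightarrow> bool) \<Rightarrow> (nat list \<Rightarrow> complex) \<Rightarrow> (nat list \<Rightarrow> complex) \<Rightarrow> bool" where
  "scalar_equiv n E x y \<longleftrightarrow> (\<exists>c. x - fa_scale c y \<in> cga_ideal n E)"

lemma scalar_equiv_refl: "scalar_equiv n E x x"
  unfolding scalar_equiv_def using ideal_zero by (intro exI[of _ 1]) simp

lemma scalar_equiv_trans:
  assumes "scalar_equiv n E x y" "scalar_equiv n E y z"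
  shows "scalar_equiv n E x z"
proof -
  obtain c d where "x - fa_scale c y \<in> cga_ideal n E" "y - fa_scale d z \<in> cga_ideal n E"
    using assms unfolding scalar_equiv_def by blast
  moreover have "x - fa_scale (c * d) z = (x - fa_scale c y) + fa_scale c (y - fa_scale d z)"
    by (auto simp: fun_eq_iff algebra_simps)
  ultimately show ?thesis
    unfolding scalar_equiv_def by (metis ideal_add ideal_scale)
qed

lemma fa_diff_scale_minus_one: "x - fa_scale (-1) y = x + y"
  by (auto simp: fun_eq_iff)

lemma square_equiv:
  assumes "i < n" "set u \<subseteq> {..<n}" "set v \<subseteq> {..<n}"
  shows "scalar_equiv n E (word_elt (u @ [i, i] @ v)) (word_elt (u @ v))"
proof -
  have "word_elt [i, i] + word_elt [] \<in> cga_rels n E"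
    unfolding cga_rels_def using assms(1) by (auto simp: fa_gen_word_elt fa_one_word_elt fa_mult_word_elt)
  from ideal_generator[OF word_elt_free_alg[OF assms(2)] word_elt_free_alg[OF assms(3)] this]
  have "word_elt (u @ [i, i] @ v) - fa_scale (-1) (word_elt (u @ v)) \<in> cga_ideal n E"
    by (simp add: fa_mult_add_left fa_mult_add_right fa_mult_word_elt fa_diff_scale_minus_one)
  then show ?thesis unfolding scalar_equiv_def by blast
qed

lemma swap_equiv:
  assumes "i < n" "j < n" "set u \<subseteq> {..<n}" "set v \<subseteq> {..<n}"
  shows "scalar_equiv n E (word_elt (u @ [i, j] @ v)) (word_elt (u @ [j, i] @ v))"
proof -
  have free: "word_elt u \<in> free_alg n" "word_elt v \<in> free_alg n"
    using assms(3,4) by (simp_all add: word_elt_free_alg)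
  consider "i = j" | "i \<noteq> j" "E i j" | "i \<noteq> j" "\<not> E i j" by blast
  then show ?thesis
  proof cases
    case 1
    then show ?thesis by (simp add: scalar_equiv_refl)
  next
    case 2
    then have "word_elt [i, j] + word_elt [j, i] \<in> cga_rels n E"
      unfolding cga_rels_def using assms(1,2) by (auto simp: fa_gen_word_elt fa_mult_word_elt)
    from ideal_generator[OF free this]
    have "word_elt (u @ [i, j] @ v) - fa_scale (-1) (word_elt (u @ [j, i] @ v)) \<in> cga_ideal n E"
      by (simp add: fa_mult_add_left fa_mult_add_right fa_mult_word_elt fa_diff_scale_minus_one)
    then show ?thesis unfolding scalar_equiv_def by blast
  next
    case 3
    then have "word_elt [i, j] - word_elt [j, i] \<in> cga_rels n E"
      unfolding cga_rels_def using assms(1,2) by (auto simp: fa_gen_word_elt fa_mult_word_elt)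
    from ideal_generator[OF free this]
    have "word_elt (u @ [i, j] @ v) - fa_scale 1 (word_elt (u @ [j, i] @ v)) \<in> cga_ideal n E"
      by (simp add: fa_mult_diff_left fa_mult_diff_right fa_mult_word_elt fa_diff_scale_minus_one)
    then show ?thesis unfolding scalar_equiv_def by blast
  qed
qed

text \<open>Inserting one letter into an increasing word, by moving it left past larger letters
  and cancelling it against an equal one.\<close>
lemma insert_letter_equiv:
  assumes "i < n" "set u \<subseteq> {..<n}"
  shows "sorted_wrt (<) L \<Longrightarrow> set L \<subseteq> {..<n} \<Longrightarrow> set v \<subseteq> {..<n} \<Longrightarrow>
    scalar_equiv n E (word_elt (u @ L @ [i] @ v)) (word_elt (u @ sorted_word (toggle (set L) i) @ v))"
proof (induct L arbitrary: v rule: rev_induct)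
  case Nil
  have "sorted_word (toggle {} i) = [i]"
    using sorted_word_set[of "[i]"] by (simp add: toggle_def)
  then show ?case by (simp add: scalar_equiv_refl)
next
  case (snoc j L)
  have L: "sorted_wrt (<) L" "\<forall>a\<in>set L. a < j" "set L \<subseteq> {..<n}" and "j < n"
    using snoc(2,3) by (auto simp: sorted_wrt_append)
  consider "j < i" | "j = i" | "i < j" by linarith
  then show ?case
  proof cases
    case 1
    have "toggle (set (L @ [j])) i = set (L @ [j, i])"
      using 1 L(2) by (auto simp: toggle_def)
    moreover have "sorted_wrt (<) (L @ [j, i])"
      using 1 L by (auto simp: sorted_wrt_append)
    ultimately have "sorted_word (toggle (set (L @ [j])) i) = L @ [j, i]"
      by (metis sorted_word_set)
    then show ?thesis by (simp add: scalar_equiv_refl)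
  next
    case 2
    then have "sorted_word (toggle (set (L @ [j])) i) = L"
      using L sorted_word_set[of L] by (auto simp: toggle_def)
    then show ?thesis
      using square_equiv[of i n "u @ L" v E] assms 2 L(3) snoc(4) by simp
  next
    case 3
    let ?A = "toggle (set L) i"
    have A: "finite ?A" "\<forall>a\<in>?A. a < j"
      using L(2) 3 by (auto simp: toggle_def)
    then have "toggle (set (L @ [j])) i = set (sorted_word ?A @ [j])"
      using L(2) 3 by (auto simp: toggle_def)
    moreover have "sorted_wrt (<) (sorted_word ?A @ [j])"
      using A by (auto simp: sorted_wrt_append strict_sorted_list_of_set)
    ultimately have "sorted_word (toggle (set (L @ [j])) i) = sorted_word ?A @ [j]"
      by (metis sorted_word_set)
    moreover have "scalar_equiv n E (word_elt (u @ (L @ [j]) @ [i] @ v)) (word_elt (u @ L @ [i] @ j # v))"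
      using swap_equiv[of j n i "u @ L" v E] assms \<open>j < n\<close> L(3) snoc(4) by simp
    moreover have "scalar_equiv n E (word_elt (u @ L @ [i] @ j # v)) (word_elt (u @ sorted_word ?A @ j # v))"
      using snoc(1)[OF L(1) L(3)] snoc(4) \<open>j < n\<close> by simp
    ultimately show ?thesis
      by (simp add: scalar_equiv_trans)
  qed
qed

lemma word_reduction_equiv:
  "set w \<subseteq> {..<n} \<Longrightarrow> set v \<subseteq> {..<n} \<Longrightarrow>
    scalar_equiv n E (word_elt (w @ v)) (word_elt (sorted_word (odd_letters w) @ v))"
proof (induct w arbitrary: v rule: rev_induct)
  case (snoc i w)
  have "scalar_equiv n E (word_elt (w @ i # v)) (word_elt (sorted_word (odd_letters w) @ i # v))"
    using snoc by simp
  moreover have "scalar_equiv n E (word_elt (sorted_word (odd_letters w) @ [i] @ v))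
                   (word_elt (sorted_word (odd_letters (w @ [i])) @ v))"
    using insert_letter_equiv[of i n "[]" "sorted_word (odd_letters w)" v E] snoc(2,3)
      odd_letters_subset[of w]
    by (simp add: finite_odd_letters strict_sorted_list_of_set odd_letters_snoc subset_iff)
  ultimately show ?case by (simp add: scalar_equiv_trans)
qed (simp add: scalar_equiv_refl)

text \<open>Each word equals its signed normal monomial modulo the ideal; the scalar produced by
  the reduction is identified with the sign by reading off the normal-form coefficient.\<close>
lemma word_normal_form:
  assumes "sym_irrefl E" "set w \<subseteq> {..<n}"
  shows "word_elt w - fa_scale (word_sign E w) (word_elt (sorted_word (odd_letters w))) \<in> cga_ideal n E"
proof -
  obtain c where c: "word_elt w - fa_scale c (word_elt (sorted_word (odd_letters w))) \<in> cga_ideal n E"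
    using word_reduction_equiv[OF assms(2), of "[]" E] unfolding scalar_equiv_def by auto
  have "nf_coeff E (odd_letters w) (word_elt w - fa_scale c (word_elt (sorted_word (odd_letters w))))
      = word_sign E w - c"
    by (simp add: nf_coeff_diff finite_fa_supp_scale nf_coeff_scale nf_coeff_word_elt
        odd_letters_sorted_word word_sign_sorted_word finite_odd_letters)
  then have "c = word_sign E w"
    using nf_coeff_ideal[OF assms(1) c] by simp
  then show ?thesis using c by simp
qed

lemma normal_form:
  assumes "sym_irrefl E" "p \<in> free_alg n"
  shows "p - (\<Sum>T\<in>Pow {..<n}. fa_scale (nf_coeff E T p) (word_elt (sorted_word T))) \<in> cga_ideal n E"
proof -
  have fin: "finite (fa_supp p)" using assms(2) free_alg_fa_supp by auto
  let ?Q = "\<Sum>w\<in>fa_supp p. fa_scale (p w * word_sign E w) (word_elt (sorted_word (odd_letters w)))"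
  have "p - ?Q = (\<Sum>w\<in>fa_supp p. fa_scale (p w)
                  (word_elt w - fa_scale (word_sign E w) (word_elt (sorted_word (odd_letters w)))))"
    by (subst fa_expansion[OF fin])
      (simp add: sum_subtractf[symmetric] fa.scale_right_diff_distrib)
  then have "p - ?Q \<in> cga_ideal n E"
    by (simp add: ideal_sum ideal_scale word_normal_form[OF assms(1)] free_alg_words[OF assms(2)])
  moreover have "?Q = (\<Sum>T\<in>Pow {..<n}. fa_scale (nf_coeff E T p) (word_elt (sorted_word T)))"
  proof -
    have "(\<Sum>T\<in>Pow {..<n}. fa_scale (nf_coeff E T p) (word_elt (sorted_word T)))
        = (\<Sum>w\<in>fa_supp p. \<Sum>T\<in>Pow {..<n}.
             if odd_letters w = T then fa_scale (p w * word_sign E w) (word_elt (sorted_word (odd_letters w))) else 0)"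
      unfolding nf_coeff_def fa.scale_sum_left by (subst sum.swap) (intro sum.cong refl, auto)
    also have "\<dots> = ?Q"
    proof (intro sum.cong refl)
      fix w assume "w \<in> fa_supp p"
      then have "odd_letters w \<in> Pow {..<n}"
        using odd_letters_subset[of w] free_alg_words[OF assms(2)] by blast
      then show "(\<Sum>T\<in>Pow {..<n}. if odd_letters w = T
                   then fa_scale (p w * word_sign E w) (word_elt (sorted_word (odd_letters w))) else 0)
          = fa_scale (p w * word_sign E w) (word_elt (sorted_word (odd_letters w)))"
        by (subst sum.delta') auto
    qed
    finally show ?thesis by simp
  qed
  ultimately show ?thesis by simp
qed


section \<open>The centre\<close>

definition parity_sign :: "(nat \<Rightarrow> bool) \<Rightarrow> nat set \<Rightarrow> complex" where
  "parity_sign Q X = (\<Prod>a\<in>X. if Q a then -1 else 1)"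

lemma parity_sign_square: "parity_sign Q X * parity_sign Q X = 1"
  unfolding parity_sign_def prod.distrib[symmetric] by (intro prod.neutral) auto

lemma parity_sign_mult: "parity_sign Q X * parity_sign R X = parity_sign (\<lambda>a. Q a \<noteq> R a) X"
  unfolding parity_sign_def prod.distrib[symmetric] by (intro prod.cong) auto

lemma parity_sign_card: "finite X \<Longrightarrow> parity_sign Q X = (-1) ^ card {a\<in>X. Q a}"
  unfolding parity_sign_def by (simp add: prod.inter_filter[symmetric])

lemma parity_sign_filter: "(-1::complex) ^ length (filter Q w) = parity_sign Q (odd_letters w)"
proof (induct w)
  case (Cons a w)
  have fin: "finite (odd_letters w)" by (rule finite_odd_letters)
  show ?case
  proof (cases "a \<in> odd_letters w")
    case True
    then have "parity_sign Q (odd_letters w) = (if Q a then -1 else 1) * parity_sign Q (odd_letters w - {a})"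
      unfolding parity_sign_def using prod.remove[OF fin] by blast
    then show ?thesis using Cons True by (auto simp: odd_letters_Cons)
  next
    case False
    then show ?thesis using Cons fin by (simp add: odd_letters_Cons parity_sign_def)
  qed
qed (simp add: parity_sign_def)

lemma word_sign_snoc: "word_sign E (w @ [i]) = word_sign E w * parity_sign (\<lambda>a. sign_pair E a i) (odd_letters w)"
  by (simp add: word_sign_def inversions_append cross_inversions_single_right power_add parity_sign_filter)

lemma word_sign_Cons: "word_sign E (i # w) = parity_sign (sign_pair E i) (odd_letters w) * word_sign E w"
  by (simp add: word_sign_def power_add parity_sign_filter)

lemma sign_pair_asym: "sym_irrefl E \<Longrightarrow> (sign_pair E a i \<noteq> sign_pair E i a) = E i a"
  unfolding sym_irrefl_def sign_pair_def by (cases "a < i"; cases "i < a") auto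

lemma nf_coeff_mult_gen_right:
  assumes "finite (fa_supp x)"
  shows "nf_coeff E (toggle T i) (fa_mult x (word_elt [i]))
       = parity_sign (\<lambda>a. sign_pair E a i) T * nf_coeff E T x"
proof -
  have "nf_coeff E (toggle T i) (fa_mult x (word_elt [i]))
      = (\<Sum>u\<in>fa_supp x. x u * nf_coeff E (toggle T i) (word_elt (u @ [i])))"
    unfolding fa_mult_word_right[OF assms] by (simp add: nf_coeff_sum nf_coeff_scale finite_fa_supp_scale)
  also have "\<dots> = (\<Sum>u\<in>fa_supp x. parity_sign (\<lambda>a. sign_pair E a i) T *
                     (if odd_letters u = T then x u * word_sign E u else 0))"
    by (intro sum.cong refl) (auto simp: nf_coeff_word_elt odd_letters_snoc toggle_cancel word_sign_snoc)
  finally show ?thesis by (simp add: nf_coeff_def sum_distrib_left)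
qed

lemma nf_coeff_mult_gen_left:
  assumes "finite (fa_supp x)"
  shows "nf_coeff E (toggle T i) (fa_mult (word_elt [i]) x) = parity_sign (sign_pair E i) T * nf_coeff E T x"
proof -
  have "nf_coeff E (toggle T i) (fa_mult (word_elt [i]) x)
      = (\<Sum>u\<in>fa_supp x. x u * nf_coeff E (toggle T i) (word_elt (i # u)))"
    unfolding fa_mult_word_left[OF assms] by (simp add: nf_coeff_sum nf_coeff_scale finite_fa_supp_scale)
  also have "\<dots> = (\<Sum>u\<in>fa_supp x. parity_sign (sign_pair E i) T *
                     (if odd_letters u = T then x u * word_sign E u else 0))"
    by (intro sum.cong refl) (auto simp: nf_coeff_word_elt odd_letters_Cons_toggle toggle_cancel word_sign_Cons)
  finally show ?thesis by (simp add: nf_coeff_def sum_distrib_left)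
qed

text \<open>The sets of vertices in which every vertex has an even number of neighbours; their
  normal monomials form a basis of the centre.\<close>
definition even_sets :: "nat \<Rightarrow> (nat \<Rightarrow> nat \<Rightarrow> bool) \<Rightarrow> nat set set" where
  "even_sets n E = {S. S \<subseteq> {..<n} \<and> (\<forall>i<n. even (card {j\<in>S. E i j}))}"

lemma even_sets_Pow: "even_sets n E \<subseteq> Pow {..<n}"
  by (auto simp: even_sets_def)

lemma even_sets_member: "S \<in> even_sets n E \<Longrightarrow> finite S \<and> S \<subseteq> {..<n}"
  by (auto simp: even_sets_def intro: finite_subset)

text \<open>A central element has vanishing coefficient at every set T having a vertex i with an
  odd number of neighbours in T: commuting with e_i changes that coefficient's sign.\<close>
lemma central_nf_coeff_vanish:
  assumes "sym_irrefl E" "x \<in> cga_center_lift n E" "i < n" "odd (card {j\<in>T. E i j})" "finite T"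
  shows "nf_coeff E T x = 0"
proof -
  have x: "x \<in> free_alg n" "\<forall>y\<in>free_alg n. fa_mult x y - fa_mult y x \<in> cga_ideal n E"
    using assms(2) unfolding cga_center_lift_def by auto
  have fin: "finite (fa_supp x)" using x(1) free_alg_fa_supp by auto
  have "word_elt [i] \<in> free_alg n" using assms(3) by (intro word_elt_free_alg) auto
  then have "nf_coeff E (toggle T i) (fa_mult x (word_elt [i]) - fa_mult (word_elt [i]) x) = 0"
    using nf_coeff_ideal[OF assms(1)] x(2) by blast
  then have eq: "parity_sign (\<lambda>a. sign_pair E a i) T * nf_coeff E T x = parity_sign (sign_pair E i) T * nf_coeff E T x"
    by (simp add: nf_coeff_diff finite_fa_supp_mult_word fin nf_coeff_mult_gen_right nf_coeff_mult_gen_left)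
  have "parity_sign (\<lambda>a. sign_pair E a i) T * parity_sign (sign_pair E i) T = parity_sign (E i) T"
    unfolding parity_sign_mult using sign_pair_asym[OF assms(1)] by simp
  also have "\<dots> = -1" using parity_sign_card[OF assms(5)] assms(4) by simp
  finally have prod: "parity_sign (\<lambda>a. sign_pair E a i) T * parity_sign (sign_pair E i) T = -1" .
  have "nf_coeff E T x = parity_sign (sign_pair E i) T * (parity_sign (sign_pair E i) T * nf_coeff E T x)"
    using parity_sign_square[of "sign_pair E i" T] by (simp add: mult.assoc[symmetric])
  also have "\<dots> = (parity_sign (\<lambda>a. sign_pair E a i) T * parity_sign (sign_pair E i) T) * nf_coeff E T x"
    unfolding eq[symmetric] by (simp add: ac_simps)
  also have "\<dots> = - nf_coeff E T x"
    unfolding prod by simp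
  finally show ?thesis by simp
qed

text \<open>For an even set S, each letter b sees the letters of S with the same total sign on both
  sides, so the sorted word on S commutes with every word up to equal signs.\<close>
lemma even_set_sign_sym:
  assumes "sym_irrefl E" "S \<in> even_sets n E" "b < n"
  shows "parity_sign (\<lambda>a. sign_pair E a b) S = parity_sign (sign_pair E b) S"
proof -
  have fin: "finite S" using even_sets_member[OF assms(2)] by auto
  have "parity_sign (\<lambda>a. sign_pair E a b) S * parity_sign (sign_pair E b) S = parity_sign (E b) S"
    unfolding parity_sign_mult using sign_pair_asym[OF assms(1)] by simp
  also have "\<dots> = 1" using parity_sign_card[OF fin] assms(2,3) by (simp add: even_sets_def)
  finally have prod: "parity_sign (\<lambda>a. sign_pair E a b) S * parity_sign (sign_pair E b) S = 1" .
  have "parity_sign (\<lambda>a. sign_pair E a b) S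
      = parity_sign (\<lambda>a. sign_pair E a b) S * (parity_sign (sign_pair E b) S * parity_sign (sign_pair E b) S)"
    by (simp add: parity_sign_square)
  also have "\<dots> = parity_sign (sign_pair E b) S"
    unfolding mult.assoc[symmetric] prod by simp
  finally show ?thesis .
qed

lemma cross_inversions_even_set:
  assumes "sym_irrefl E" "S \<in> even_sets n E"
  shows "set u \<subseteq> {..<n} \<Longrightarrow> (-1::complex) ^ cross_inversions E (sorted_word S) u = (-1) ^ cross_inversions E u (sorted_word S)"
proof (induct u)
  case (Cons b u)
  have fin: "finite S" using even_sets_member[OF assms(2)] by auto
  have "cross_inversions E (sorted_word S) (b # u)
      = length (filter (\<lambda>a. sign_pair E a b) (sorted_word S)) + cross_inversions E (sorted_word S) u"
    using cross_inversions_append_right[of E "sorted_word S" "[b]" u] cross_inversions_single_right by simp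
  moreover have "cross_inversions E (b # u) (sorted_word S)
      = length (filter (sign_pair E b) (sorted_word S)) + cross_inversions E u (sorted_word S)"
    by (simp add: cross_inversions_def)
  ultimately show ?case
    using Cons even_set_sign_sym[OF assms, of b]
    by (simp add: power_add parity_sign_filter odd_letters_sorted_word fin)
qed (simp add: cross_inversions_def)

lemma even_set_commutes_word:
  assumes "sym_irrefl E" "S \<in> even_sets n E" "set u \<subseteq> {..<n}"
  shows "word_elt (sorted_word S @ u) - word_elt (u @ sorted_word S) \<in> cga_ideal n E"
proof -
  have "finite S" "S \<subseteq> {..<n}" using even_sets_member[OF assms(2)] by auto
  then have S: "set (sorted_word S) \<subseteq> {..<n}" by simp
  have "odd_letters (sorted_word S @ u) = odd_letters (u @ sorted_word S)"
    by (auto simp: odd_letters_append)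
  moreover have "word_sign E (sorted_word S @ u) = word_sign E (u @ sorted_word S)"
    unfolding word_sign_def inversions_append power_add
    using cross_inversions_even_set[OF assms] by simp
  ultimately show ?thesis
    using ideal_diff[OF word_normal_form[OF assms(1), of "sorted_word S @ u"]
                        word_normal_form[OF assms(1), of "u @ sorted_word S"]] S assms(3)
    by simp
qed

lemma even_set_central:
  assumes "sym_irrefl E" "S \<in> even_sets n E"
  shows "word_elt (sorted_word S) \<in> cga_center_lift n E"
proof -
  have "finite S" "S \<subseteq> {..<n}" using even_sets_member[OF assms(2)] by auto
  then have free: "word_elt (sorted_word S) \<in> free_alg n" by (intro word_elt_free_alg) simp
  have "fa_mult (word_elt (sorted_word S)) y - fa_mult y (word_elt (sorted_word S)) \<in> cga_ideal n E"
    if y: "y \<in> free_alg n" for y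
  proof -
    have "finite (fa_supp y)" using y free_alg_fa_supp by auto
    then have "fa_mult (word_elt (sorted_word S)) y - fa_mult y (word_elt (sorted_word S))
        = (\<Sum>u\<in>fa_supp y. fa_scale (y u) (word_elt (sorted_word S @ u) - word_elt (u @ sorted_word S)))"
      by (simp add: fa_mult_word_left fa_mult_word_right sum_subtractf[symmetric] fa.scale_right_diff_distrib)
    also have "\<dots> \<in> cga_ideal n E"
      by (intro ideal_sum ideal_scale even_set_commutes_word[OF assms] free_alg_words[OF y])
    finally show ?thesis .
  qed
  then show ?thesis unfolding cga_center_lift_def using free by blast
qed

lemma central_normal_form:
  assumes "sym_irrefl E" "x \<in> cga_center_lift n E"
  shows "x - (\<Sum>T\<in>even_sets n E. fa_scale (nf_coeff E T x) (word_elt (sorted_word T))) \<in> cga_ideal n E"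
proof -
  have sums: "(\<Sum>T\<in>Pow {..<n}. fa_scale (nf_coeff E T x) (word_elt (sorted_word T)))
      = (\<Sum>T\<in>even_sets n E. fa_scale (nf_coeff E T x) (word_elt (sorted_word T)))"
  proof (rule sum.mono_neutral_right)
    show "\<forall>T\<in>Pow {..<n} - even_sets n E. fa_scale (nf_coeff E T x) (word_elt (sorted_word T)) = 0"
    proof
      fix T assume T: "T \<in> Pow {..<n} - even_sets n E"
      then obtain i where "i < n" "odd (card {j\<in>T. E i j})" unfolding even_sets_def by auto
      moreover have "finite T" using T by (auto intro: finite_subset)
      ultimately have "nf_coeff E T x = 0" using central_nf_coeff_vanish[OF assms] by blast
      then show "fa_scale (nf_coeff E T x) (word_elt (sorted_word T)) = 0" by (simp add: fun_eq_iff)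
    qed
  qed (simp_all add: even_sets_Pow)
  have "x \<in> free_alg n" using assms(2) unfolding cga_center_lift_def by auto
  from normal_form[OF assms(1) this] show ?thesis unfolding sums .
qed


section \<open>The dimension of the centre\<close>

text \<open>Counting principle for a quotient V/I: if each member b of a finite family B that is
  independent modulo the subspace I is congruent modulo I to some f b in the span of B0,
  then f maps B injectively onto an independent family, so card B \<le> card B0.\<close>
lemma (in vector_space) card_le_of_independent_mod:
  assumes "finite B0" "subspace I" "finite B" "independent B" "span B \<inter> I = {0}"
    and f: "\<And>b. b \<in> B \<Longrightarrow> f b \<in> span B0 \<and> b - f b \<in> I"
  shows "card B \<le> card B0"
proof -
  have zero: "z = 0" if "z \<in> span B" "z \<in> I" for z
    using assms(5) that by blast
  have inj: "inj_on f B"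
  proof (rule inj_onI)
    fix a b assume ab: "a \<in> B" "b \<in> B" "f a = f b"
    then have "a - b = (a - f a) - (b - f b)" by simp
    then have "a - b \<in> I" using f ab subspace_diff[OF assms(2)] by metis
    then show "a = b" using zero[of "a - b"] ab span_base span_diff by force
  qed
  have "independent (f ` B)"
  proof
    assume "dependent (f ` B)"
    then obtain u where u: "\<exists>v\<in>f ` B. u v \<noteq> 0" "(\<Sum>v\<in>f ` B. u v *s v) = 0"
      using dependent_finite[of "f ` B"] assms(3) by auto
    let ?z = "\<Sum>b\<in>B. u (f b) *s b"
    have "(\<Sum>b\<in>B. u (f b) *s f b) = 0" using u(2) sum.reindex[OF inj, of "\<lambda>v. u v *s v"] by simp
    then have "?z = (\<Sum>b\<in>B. u (f b) *s (b - f b))"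
      by (simp add: scale_right_diff_distrib sum_subtractf)
    then have "?z \<in> I"
      using f by (auto intro!: subspace_sum[OF assms(2)] subspace_scale[OF assms(2)])
    then have "?z = 0" using zero span_sum span_scale span_base by (metis (no_types, lifting))
    then have "\<forall>b\<in>B. u (f b) = 0" using assms(4) dependent_finite[OF assms(3)] by auto
    then show False using u(1) by auto
  qed
  moreover have "f ` B \<subseteq> span B0" using f by auto
  ultimately have "card (f ` B) \<le> card B0" using independent_span_bound[OF assms(1)] by blast
  then show ?thesis using card_image[OF inj] by simp
qed

definition normal_monomials :: "nat set set \<Rightarrow> (nat list \<Rightarrow> complex) set" where
  "normal_monomials \<S> = (\<lambda>S. word_elt (sorted_word S)) ` \<S>"

lemma inj_on_normal_monomial: "\<S> \<subseteq> Pow {..<n} \<Longrightarrow> inj_on (\<lambda>S. word_elt (sorted_word S)) \<S>"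
  by (rule inj_onI) (metis Pow_iff finite_lessThan rev_finite_subset sorted_list_of_set_inject subsetD word_elt_inj)

lemma finite_normal_monomials: "\<S> \<subseteq> Pow {..<n} \<Longrightarrow> finite (normal_monomials \<S>)"
  unfolding normal_monomials_def by (rule finite_imageI) (auto intro: finite_subset)

lemma nf_coeff_normal_combination:
  assumes "\<S> \<subseteq> Pow {..<n}" "T \<in> \<S>"
  shows "nf_coeff E T (\<Sum>v\<in>normal_monomials \<S>. fa_scale (c v) v) = c (word_elt (sorted_word T))"
proof -
  have fin: "finite S" if "S \<in> \<S>" for S using assms(1) that by (auto intro: finite_subset)
  have "nf_coeff E T (\<Sum>v\<in>normal_monomials \<S>. fa_scale (c v) v)
      = (\<Sum>S\<in>\<S>. c (word_elt (sorted_word S)) * nf_coeff E T (word_elt (sorted_word S)))"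
    unfolding normal_monomials_def sum.reindex[OF inj_on_normal_monomial[OF assms(1)]]
    by (simp add: nf_coeff_sum finite_fa_supp_scale nf_coeff_scale)
  also have "\<dots> = (\<Sum>S\<in>\<S>. if S = T then c (word_elt (sorted_word S)) else 0)"
    by (intro sum.cong refl) (simp add: nf_coeff_sorted_word fin)
  also have "\<dots> = c (word_elt (sorted_word T))"
    using assms(2) finite_subset[OF assms(1)] by simp
  finally show ?thesis .
qed

lemma normal_monomials_independent_mod:
  assumes "sym_irrefl E" "\<S> \<subseteq> Pow {..<n}"
  shows "\<not> fa.dependent (normal_monomials \<S>)"
    and "fa.span (normal_monomials \<S>) \<inter> cga_ideal n E = {0}"
proof -
  have vanish: "c v = 0"
    if comb: "(\<Sum>v\<in>normal_monomials \<S>. fa_scale (c v) v) \<in> cga_ideal n E"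
      and v: "v \<in> normal_monomials \<S>" for c v
  proof -
    obtain T where "T \<in> \<S>" "v = word_elt (sorted_word T)"
      using v unfolding normal_monomials_def by blast
    then show ?thesis
      using nf_coeff_ideal[OF assms(1) comb] nf_coeff_normal_combination[OF assms(2)] by metis
  qed
  have fin: "finite (normal_monomials \<S>)" by (rule finite_normal_monomials[OF assms(2)])
  show "\<not> fa.dependent (normal_monomials \<S>)"
    using vanish ideal_zero unfolding fa.dependent_finite[OF fin] by metis
  show "fa.span (normal_monomials \<S>) \<inter> cga_ideal n E = {0}"
  proof (intro equalityI subsetI)
    fix q assume q: "q \<in> fa.span (normal_monomials \<S>) \<inter> cga_ideal n E"
    then obtain c where c: "q = (\<Sum>v\<in>normal_monomials \<S>. fa_scale (c v) v)"
      using fa.span_finite[OF fin] by auto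
    then have "q = (\<Sum>v\<in>normal_monomials \<S>. fa_scale 0 v)"
      using vanish q by (metis (no_types, lifting) IntD2 sum.cong)
    then show "q \<in> {0}" by simp
  qed (simp add: fa.span_zero ideal_zero)
qed

lemma center_dim_witness:
  fixes n :: nat and E :: "nat \<Rightarrow> nat \<Rightarrow> bool"
  assumes "sym_irrefl E"
  defines "B0 \<equiv> normal_monomials (even_sets n E)"
  shows "card B0 = card (even_sets n E)" "B0 \<subseteq> cga_center_lift n E" "finite B0" "\<not> fa.dependent B0"
    "fa.span B0 \<inter> cga_ideal n E = {0}"
  using card_image[OF inj_on_normal_monomial[OF even_sets_Pow]]
    even_set_central[OF assms(1)] finite_normal_monomials[OF even_sets_Pow]
    normal_monomials_independent_mod[OF assms(1) even_sets_Pow]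
  unfolding B0_def normal_monomials_def by auto

lemma center_dim_bound:
  assumes "sym_irrefl E" "B \<subseteq> cga_center_lift n E" "finite B" "\<not> fa.dependent B"
    "fa.span B \<inter> cga_ideal n E = {0}"
  shows "card B \<le> card (even_sets n E)"
proof -
  let ?f = "\<lambda>b. \<Sum>T\<in>even_sets n E. fa_scale (nf_coeff E T b) (word_elt (sorted_word T))"
  have span: "?f b \<in> fa.span (normal_monomials (even_sets n E))" for b
    unfolding normal_monomials_def by (intro fa.span_sum fa.span_scale fa.span_base) auto
  have congruent: "b - ?f b \<in> cga_ideal n E" if "b \<in> B" for b
    using central_normal_form[OF assms(1)] assms(2) that by blast
  have "fa.subspace (cga_ideal n E)"
    unfolding cga_ideal_def by simp
  then have "card B \<le> card (normal_monomials (even_sets n E))"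
    using span congruent
    by (intro fa.card_le_of_independent_mod[OF finite_normal_monomials[OF even_sets_Pow] _ assms(3-5),
          where f = ?f]) auto
  then show ?thesis using center_dim_witness(1)[OF assms(1)] by simp
qed

theorem center_dim:
  assumes "sym_irrefl E"
  shows "cga_center_dim n E = card (even_sets n E)"
  unfolding cga_center_dim_def quot_dim_def
proof (rule cSup_eq_maximum)
  show "card (even_sets n E) \<in> {card B |B. B \<subseteq> cga_center_lift n E \<and> finite B \<and> \<not> fa.dependent B
                                      \<and> fa.span B \<inter> cga_ideal n E = {0}}"
    using center_dim_witness[OF assms] by (metis (mono_tags, lifting) mem_Collect_eq)
qed (use center_dim_bound[OF assms] in blast)


section \<open>Counting kernels over a finite field\<close>

lemma card_carrier_vec:
  assumes "finite (UNIV :: 'a set)"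
  shows "card (carrier_vec n :: 'a vec set) = card (UNIV :: 'a set) ^ n"
proof -
  have vec_restrict: "vec n (restrict (($) v) {..<n}) = v" if "v \<in> carrier_vec n" for v :: "'a vec"
    using that by (intro eq_vecI) auto
  have restrict_vec: "restrict (($) (vec n f)) {..<n} = f" if "f \<in> {..<n} \<rightarrow>\<^sub>E (UNIV :: 'a set)" for f
    using that by (intro extensionalityI[where A = "{..<n}"]) (auto simp: PiE_def)
  have "bij_betw (\<lambda>v. restrict (($) v) {..<n}) (carrier_vec n) ({..<n} \<rightarrow>\<^sub>E (UNIV :: 'a set))"
    by (rule bij_betw_byWitness[where f' = "\<lambda>f. vec n f"])
      (simp_all add: vec_restrict restrict_vec image_subset_iff)
  then show ?thesis using assms by (simp add: bij_betw_same_card card_PiE)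
qed

context vec_space
begin

lemma maximal_lin_indpt_span:
  assumes S: "S \<subseteq> carrier_vec n" and U: "maximal U (\<lambda>T. T \<subseteq> S \<and> lin_indpt T)"
  shows "span U = span S"
proof -
  have US: "U \<subseteq> S" "lin_indpt U" using U by (auto simp: maximal_def)
  have UC: "U \<subseteq> carrier_vec n" using US(1) S by auto
  have "S \<subseteq> span U"
  proof
    fix s assume s: "s \<in> S"
    show "s \<in> span U"
    proof (rule ccontr)
      assume out: "s \<notin> span U"
      then have "s \<notin> U" using in_own_span[OF UC] by auto
      have "lin_indpt (U \<union> {s})"
        using lin_dep_iff_in_span[OF UC US(2), of s] S s out \<open>s \<notin> U\<close> by auto
      then have "U \<union> {s} = U" using U US s unfolding maximal_def by blast
      then show False using \<open>s \<notin> U\<close> by auto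
    qed
  qed
  then have "span S \<subseteq> span U" by (rule span_is_subset[OF _ span_is_submodule[OF UC]])
  moreover have "span U \<subseteq> span S" using span_is_monotone US(1) by metis
  ultimately show ?thesis by blast
qed

lemma card_span_lin_indpt:
  assumes q: "finite (UNIV :: 'a set)"
    and U: "U \<subseteq> carrier_vec n" "finite U" "lin_indpt U"
  shows "card (span U) = card (UNIV :: 'a set) ^ card U"
proof -
  have span_eq: "span U = (\<lambda>a. lincomb a U) ` (U \<rightarrow>\<^sub>E UNIV)"
  proof
    show "span U \<subseteq> (\<lambda>a. lincomb a U) ` (U \<rightarrow>\<^sub>E UNIV)"
    proof
      fix x assume "x \<in> span U"
      then obtain a where a: "x = lincomb a U" using finite_span[OF U(2)] U(1) by auto
      have "lincomb a U = lincomb (restrict a U) U"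
        by (rule lincomb_cong) (use U in auto)
      then show "x \<in> (\<lambda>a. lincomb a U) ` (U \<rightarrow>\<^sub>E UNIV)" using a by auto
    qed
  qed (use finite_span[OF U(2)] U(1) in auto)
  have "inj_on (\<lambda>a. lincomb a U) (U \<rightarrow>\<^sub>E UNIV)"
  proof (rule inj_onI)
    fix a b assume a: "a \<in> U \<rightarrow>\<^sub>E UNIV" and b: "b \<in> U \<rightarrow>\<^sub>E UNIV" and eq: "lincomb a U = lincomb b U"
    have "a v = b v" if v: "v \<in> U" for v
    proof (rule ccontr)
      assume ne: "a v \<noteq> b v"
      have "lincomb (\<lambda>x. a x - b x) U = 0\<^sub>v n"
      proof (rule eq_vecI)
        fix i assume "i < dim_vec (0\<^sub>v n)"
        then have i: "i < n" by simp
        have "lincomb (\<lambda>x. a x - b x) U $ i = (\<Sum>x\<in>U. a x * x $ i) - (\<Sum>x\<in>U. b x * x $ i)"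
          unfolding lincomb_index[OF i U(1)] by (simp only: left_diff_distrib sum_subtractf)
        also have "\<dots> = 0"
          using arg_cong[OF eq, of "\<lambda>w. w $ i"] unfolding lincomb_index[OF i U(1)] by simp
        finally show "lincomb (\<lambda>x. a x - b x) U $ i = 0\<^sub>v n $ i" using i by simp
      qed (use lincomb_dim[OF U(2,1)] in simp)
      then have "lin_dep U"
        by (intro lin_dep_crit[where A = U and S = U and a = "\<lambda>x. a x - b x" and v = v]) (use U v ne in auto)
      then show False using U(3) by simp
    qed
    then show "a = b" using a b by (auto intro: extensionalityI[of a U b] simp: PiE_def)
  qed
  then have "card (span U) = card (U \<rightarrow>\<^sub>E (UNIV :: 'a set))"
    unfolding span_eq by (rule card_image)
  also have "\<dots> = card (UNIV :: 'a set) ^ card U" using U(2) by (simp add: card_PiE)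
  finally show ?thesis .
qed

lemma card_col_space:
  assumes q: "finite (UNIV :: 'a set)" and A: "A \<in> carrier_mat n nc"
  shows "card (span (set (cols A))) = card (UNIV :: 'a set) ^ rank A"
proof -
  obtain U where U: "finite U" "maximal U (\<lambda>T. T \<subseteq> set (cols A) \<and> lin_indpt T)"
    using maximal_exists_superset[of "set (cols A)" "\<lambda>T. T \<subseteq> set (cols A) \<and> lin_indpt T" "{}"]
    unfolding lin_dep_def by auto
  have cols: "set (cols A) \<subseteq> carrier_vec n" using A cols_dim[of A] by auto
  have "U \<subseteq> carrier_vec n" "lin_indpt U" using U(2) cols by (auto simp: maximal_def)
  then show ?thesis
    using card_span_lin_indpt[OF q _ U(1)] maximal_lin_indpt_span[OF cols U(2)] rank_card_indpt[OF A U(2)]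
    by simp
qed

text \<open>Rank-nullity by counting: the nonempty fibres of x \<mapsto> A x are translates of the
  kernel, and the image is the column space.\<close>
lemma card_kernel:
  assumes q: "finite (UNIV :: 'a set)" and A: "A \<in> carrier_mat n nc"
  shows "card {x \<in> carrier_vec nc. A *\<^sub>v x = 0\<^sub>v n} * card (UNIV :: 'a set) ^ rank A = card (UNIV :: 'a set) ^ nc"
proof -
  let ?K = "{x \<in> carrier_vec nc. A *\<^sub>v x = 0\<^sub>v n}"
  let ?F = "\<lambda>y. {x \<in> carrier_vec nc. A *\<^sub>v x = y}"
  let ?Im = "(\<lambda>x. A *\<^sub>v x) ` carrier_vec nc"
  have image: "?Im = span (set (cols A))"
    using col_space_eq[OF A] A unfolding col_space_def by auto
  have fibre: "card (?F (A *\<^sub>v x0)) = card ?K" if x0: "x0 \<in> carrier_vec nc" for x0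
  proof -
    have "bij_betw (\<lambda>k. k + x0) ?K (?F (A *\<^sub>v x0))"
    proof (rule bij_betw_byWitness[where f' = "\<lambda>z. z - x0"])
      show "\<forall>k\<in>?K. k + x0 - x0 = k" "\<forall>z\<in>?F (A *\<^sub>v x0). z - x0 + x0 = z"
        using x0 by (auto intro!: eq_vecI)
      show "(\<lambda>k. k + x0) ` ?K \<subseteq> ?F (A *\<^sub>v x0)"
        using x0 A by (auto simp: mult_add_distrib_mat_vec)
      show "(\<lambda>z. z - x0) ` ?F (A *\<^sub>v x0) \<subseteq> ?K"
        using x0 A by (auto simp: mult_minus_distrib_mat_vec)
    qed
    then show ?thesis by (rule bij_betw_same_card[symmetric])
  qed
  have "card (carrier_vec nc :: 'a vec set) > 0"
    unfolding card_carrier_vec[OF q] using q by (simp add: finite_UNIV_card_ge_0)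
  then have fin: "finite (carrier_vec nc :: 'a vec set)" by (rule card_ge_0_finite)
  have "card (\<Union>y\<in>?Im. ?F y) = (\<Sum>y\<in>?Im. card (?F y))"
    by (rule card_UN_disjoint) (use fin in auto)
  also have "(\<Union>y\<in>?Im. ?F y) = carrier_vec nc" by blast
  also have "(\<Sum>y\<in>?Im. card (?F y)) = (\<Sum>y\<in>?Im. card ?K)"
    using fibre by (intro sum.cong) auto
  finally have "card (carrier_vec nc :: 'a vec set) = card ?Im * card ?K" by simp
  then show ?thesis
    unfolding card_carrier_vec[OF q] image card_col_space[OF q A] by simp
qed

end

section \<open>The adjacency matrix over F_2\<close>

lemma of_nat_bit_eq_0: "(of_nat k :: bit) = 0 \<longleftrightarrow> even k"
  by (induct k) (auto simp: add_eq_0_iff_both_eq_0)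

definition char_vec :: "nat \<Rightarrow> nat set \<Rightarrow> bit vec" where
  "char_vec n S = vec n (\<lambda>j. if j \<in> S then 1 else 0)"

lemma bij_char_vec: "bij_betw (char_vec n) (Pow {..<n}) (carrier_vec n)"
proof (rule bij_betw_byWitness[where f' = "\<lambda>v. {j. j < n \<and> v $ j = 1}"])
  show "\<forall>S\<in>Pow {..<n}. {j. j < n \<and> char_vec n S $ j = 1} = S"
    by (auto simp: char_vec_def) (metis zero_neq_one)
  show "\<forall>v\<in>carrier_vec n. char_vec n {j. j < n \<and> v $ j = 1} = v"
  proof
    fix v :: "bit vec" assume "v \<in> carrier_vec n"
    then show "char_vec n {j. j < n \<and> v $ j = 1} = v"
      by (intro eq_vecI) (auto simp: char_vec_def split: if_splits elim: bit.exhaust)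
  qed
qed (auto simp: char_vec_def split: if_splits)

lemma adj_mat_F2_char_vec:
  assumes "S \<subseteq> {..<n}" "i < n"
  shows "(adj_mat_F2 n E *\<^sub>v char_vec n S) $ i = of_nat (card {j\<in>S. E i j})"
proof -
  have "(adj_mat_F2 n E *\<^sub>v char_vec n S) $ i = row (adj_mat_F2 n E) i \<bullet> char_vec n S"
    using assms(2) by (simp add: adj_mat_F2_def)
  also have "\<dots> = (\<Sum>j\<in>{0..<n}. of_bool (E i j \<and> j \<in> S))"
    unfolding scalar_prod_def using assms(2)
    by (intro sum.cong) (auto simp: adj_mat_F2_def char_vec_def)
  also have "\<dots> = of_nat (card ({0..<n} \<inter> {j. E i j \<and> j \<in> S}))"
    by simp
  also have "{0..<n} \<inter> {j. E i j \<and> j \<in> S} = {j\<in>S. E i j}" using assms(1) by auto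
  finally show ?thesis .
qed

lemma char_vec_even_sets: "char_vec n ` even_sets n E = {x \<in> carrier_vec n. adj_mat_F2 n E *\<^sub>v x = 0\<^sub>v n}"
proof -
  have kernel_iff: "adj_mat_F2 n E *\<^sub>v char_vec n S = 0\<^sub>v n \<longleftrightarrow> (\<forall>i<n. even (card {j\<in>S. E i j}))"
    if "S \<subseteq> {..<n}" for S
    using adj_mat_F2_char_vec[OF that] of_nat_bit_eq_0
    by (auto simp: vec_eq_iff adj_mat_F2_def)
  have "char_vec n ` even_sets n E = {x \<in> char_vec n ` Pow {..<n}. adj_mat_F2 n E *\<^sub>v x = 0\<^sub>v n}"
    using kernel_iff by (auto simp: even_sets_def)
  then show ?thesis using bij_char_vec[of n] by (simp add: bij_betw_def)
qed

lemma card_UNIV_bit: "card (UNIV :: bit set) = 2"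
proof -
  have "card (UNIV :: bit set) = card {0 :: bit, 1}"
    by (rule arg_cong[where f = card]) (auto intro: bit.exhaust)
  also have "\<dots> = 2" by simp
  finally show ?thesis .
qed

lemma card_even_sets: "card (even_sets n E) = 2 ^ (n - vec_space.rank n (adj_mat_F2 n E))"
proof -
  let ?r = "vec_space.rank n (adj_mat_F2 n E)"
  let ?K = "{x \<in> carrier_vec n. adj_mat_F2 n E *\<^sub>v x = 0\<^sub>v n}"
  have A: "adj_mat_F2 n E \<in> carrier_mat n n" by (simp add: adj_mat_F2_def)
  have "inj_on (char_vec n) (even_sets n E)"
    using bij_char_vec[of n] even_sets_Pow unfolding bij_betw_def by (rule inj_on_subset[OF conjunct1])
  then have "card (even_sets n E) = card ?K"
    using char_vec_even_sets[of n E] card_image by fastforce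
  moreover have "card ?K * 2 ^ ?r = 2 ^ (n - ?r) * 2 ^ ?r"
    using vec_space.card_kernel[OF _ A] vec_space.rank_le_nc[OF A]
    by (simp add: card_UNIV_bit card_ge_0_finite power_add[symmetric])
  ultimately show ?thesis by simp
qed


lemma rank_adj_mat_F2_le: "vec_space.rank n (adj_mat_F2 n E) \<le> n"
  using vec_space.rank_le_nc[of "adj_mat_F2 n E" n n] by (simp add: adj_mat_F2_def)

theorem center_dim_rank:
  assumes "simple_graph n E"
  shows "cga_center_dim n E = 2 ^ (n - vec_space.rank n (adj_mat_F2 n E))"
  using center_dim[OF simple_graph_sym_irrefl[OF assms]] card_even_sets by simp

theorem mainTheorem5:
  fixes n :: nat and E1 E2 :: "nat \<Rightarrow> nat \<Rightarrow> bool"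
  assumes "simple_graph n E1" and "simple_graph n E2"
  shows "cga_center_dim n E1 = cga_center_dim n E2 \<longleftrightarrow>
         vec_space.rank n (adj_mat_F2 n E1) = vec_space.rank n (adj_mat_F2 n E2)"
proof -
  let ?r1 = "vec_space.rank n (adj_mat_F2 n E1)" and ?r2 = "vec_space.rank n (adj_mat_F2 n E2)"
  have "cga_center_dim n E1 = cga_center_dim n E2 \<longleftrightarrow> (2::nat) ^ (n - ?r1) = 2 ^ (n - ?r2)"
    unfolding center_dim_rank[OF assms(1)] center_dim_rank[OF assms(2)] ..
  also have "\<dots> \<longleftrightarrow> n - ?r1 = n - ?r2"
    by (rule power_inject_exp) simp
  also have "\<dots> \<longleftrightarrow> ?r1 = ?r2"
    using rank_adj_mat_F2_le[of n E1] rank_adj_mat_F2_le[of n E2] by linarith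
  finally show ?thesis .
qed

end
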